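(* Let $G=(V,E)$ be an atomic bispanning graph with vertex-connectivity $2$, and let $\{x,y\}\subseteq V$ be a vertex cut. Then $G$ contains no edge with ends $x$ and $y$, and $G$ is the $2$-clique sum of two simple bispanning graphs: there exist simple bispanning graphs $G_1$, $G_2$ (on disjoint vertex and edge sets) with edges $d_1$ of $G_1$ and $d_2$ of $G_2$ such that $G$ is obtained from the disjoint union of $G_1$ and $G_2$ by identifying the two ends of $d_1$ with the two ends of $d_2$ and deleting $d_1$ and $d_2$.
   Context: Graphs are finite, undirected, may have parallel edges, no loops; simple means no parallel edges. A spanning tree of $G$ is $T\subseteq E$ with $(V,T)$ connected and acyclic; $G$ is bispanning if $E$ is the union of two disjoint spanning trees. A bispanning graph is atomic if its only bispanning subgraphs are itself and single vertices. A vertex cut is a vertex set whose deletion increases the number of connected components; vertex-connectivity is the largest $k$ with $|V|>k$ such that deleting fewer than $k$ vertices leaves $G$ connected. *)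

theory Defs
  imports Main
begin

text \<open>A (multi)graph is a triple (V, E, h): a finite vertex set V, a finite edge
set E, and an incidence map h sending each edge to its set of ends, which is a
2-element subset of V (no loops; parallel edges allowed).\<close>

definition graph :: "'a set \<Rightarrow> 'e set \<Rightarrow> ('e \<Rightarrow> 'a set) \<Rightarrow> bool" where
  "graph V E h \<longleftrightarrow> finite V \<and> finite E \<and> (\<forall>e\<in>E. h e \<subseteq> V \<and> card (h e) = 2)"

definition simple_graph :: "'a set \<Rightarrow> 'e set \<Rightarrow> ('e \<Rightarrow> 'a set) \<Rightarrow> bool" where
  "simple_graph V E h \<longleftrightarrow> graph V E h \<and> inj_on h E"

definition adj_rel :: "'e set \<Rightarrow> ('e \<Rightarrow> 'a set) \<Rightarrow> ('a \<times> 'a) set" where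
  "adj_rel F h = {(u, v). \<exists>e\<in>F. h e = {u, v}}"

definition connected_graph :: "'a set \<Rightarrow> 'e set \<Rightarrow> ('e \<Rightarrow> 'a set) \<Rightarrow> bool" where
  "connected_graph V F h \<longleftrightarrow> (\<forall>u\<in>V. \<forall>v\<in>V. (u, v) \<in> (adj_rel F h)\<^sup>*)"

text \<open>Acyclic: no edge lies on a cycle, i.e. the ends of every edge e are not
joined by a walk avoiding e (this also excludes pairs of parallel edges).\<close>
definition acyclic_graph :: "'e set \<Rightarrow> ('e \<Rightarrow> 'a set) \<Rightarrow> bool" where
  "acyclic_graph F h \<longleftrightarrow>
     (\<forall>e\<in>F. \<forall>u v. h e = {u, v} \<longrightarrow> (u, v) \<notin> (adj_rel (F - {e}) h)\<^sup>*)"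

definition spanning_tree :: "'a set \<Rightarrow> 'e set \<Rightarrow> ('e \<Rightarrow> 'a set) \<Rightarrow> 'e set \<Rightarrow> bool" where
  "spanning_tree V E h T \<longleftrightarrow> T \<subseteq> E \<and> connected_graph V T h \<and> acyclic_graph T h"

definition bispanning :: "'a set \<Rightarrow> 'e set \<Rightarrow> ('e \<Rightarrow> 'a set) \<Rightarrow> bool" where
  "bispanning V E h \<longleftrightarrow> graph V E h \<and>
     (\<exists>T1 T2. T1 \<inter> T2 = {} \<and> T1 \<union> T2 = E \<and> spanning_tree V E h T1 \<and> spanning_tree V E h T2)"

definition subgraph :: "'a set \<Rightarrow> 'e set \<Rightarrow> 'a set \<Rightarrow> 'e set \<Rightarrow> ('e \<Rightarrow> 'a set) \<Rightarrow> bool" where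
  "subgraph V' E' V E h \<longleftrightarrow> V' \<subseteq> V \<and> E' \<subseteq> E \<and> (\<forall>e\<in>E'. h e \<subseteq> V')"

definition atomic :: "'a set \<Rightarrow> 'e set \<Rightarrow> ('e \<Rightarrow> 'a set) \<Rightarrow> bool" where
  "atomic V E h \<longleftrightarrow> bispanning V E h \<and>
     (\<forall>V' E'. V' \<noteq> {} \<and> subgraph V' E' V E h \<and> bispanning V' E' h \<longrightarrow>
        (V' = V \<and> E' = E) \<or> card V' = 1)"

definition del_edges :: "'a set \<Rightarrow> 'e set \<Rightarrow> ('e \<Rightarrow> 'a set) \<Rightarrow> 'e set" where
  "del_edges S E h = {e\<in>E. h e \<inter> S = {}}"

definition num_components :: "'a set \<Rightarrow> 'e set \<Rightarrow> ('e \<Rightarrow> 'a set) \<Rightarrow> nat" where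
  "num_components V E h = card {{w\<in>V. (v, w) \<in> (adj_rel E h)\<^sup>*} | v. v \<in> V}"

definition vertex_cut :: "'a set \<Rightarrow> 'e set \<Rightarrow> ('e \<Rightarrow> 'a set) \<Rightarrow> 'a set \<Rightarrow> bool" where
  "vertex_cut V E h S \<longleftrightarrow> S \<subseteq> V \<and>
     num_components (V - S) (del_edges S E h) h > num_components V E h"

definition k_connected :: "nat \<Rightarrow> 'a set \<Rightarrow> 'e set \<Rightarrow> ('e \<Rightarrow> 'a set) \<Rightarrow> bool" where
  "k_connected k V E h \<longleftrightarrow> card V > k \<and>
     (\<forall>S\<subseteq>V. card S < k \<longrightarrow> connected_graph (V - S) (del_edges S E h) h)"

definition vertex_connectivity :: "'a set \<Rightarrow> 'e set \<Rightarrow> ('e \<Rightarrow> 'a set) \<Rightarrow> nat" where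
  "vertex_connectivity V E h = (GREATEST k. k_connected k V E h)"

text \<open>G = (V,E,h) is obtained (up to isomorphism) from the disjoint union of
G1 = (V1,E1,h1) and G2 = (V2,E2,h2) by identifying the two ends of d1 with the two
ends of d2 (via a bijection sigma) and deleting d1 and d2.  phi maps the vertices
of the disjoint union onto V, psi maps the remaining edges bijectively onto E.\<close>
definition two_clique_sum ::
  "'v set \<Rightarrow> 'f set \<Rightarrow> ('f \<Rightarrow> 'v set) \<Rightarrow> 'f \<Rightarrow> 'v set \<Rightarrow> 'f set \<Rightarrow> ('f \<Rightarrow> 'v set) \<Rightarrow> 'f \<Rightarrow>
   'a set \<Rightarrow> 'e set \<Rightarrow> ('e \<Rightarrow> 'a set) \<Rightarrow> bool" where
  "two_clique_sum V1 E1 h1 d1 V2 E2 h2 d2 V E h \<longleftrightarrow>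
     (\<exists>\<sigma> \<phi> \<psi>. bij_betw \<sigma> (h1 d1) (h2 d2) \<and>
        \<phi> ` (V1 \<union> V2) = V \<and>
        (\<forall>u\<in>V1 \<union> V2. \<forall>w\<in>V1 \<union> V2. \<phi> u = \<phi> w \<longleftrightarrow>
            u = w \<or> (u \<in> h1 d1 \<and> w = \<sigma> u) \<or> (w \<in> h1 d1 \<and> u = \<sigma> w)) \<and>
        bij_betw \<psi> ((E1 - {d1}) \<union> (E2 - {d2})) E \<and>
        (\<forall>e\<in>E1 - {d1}. h (\<psi> e) = \<phi> ` h1 e) \<and>
        (\<forall>e\<in>E2 - {d2}. h (\<psi> e) = \<phi> ` h2 e))"

end

theory Submission
  imports Defs
begin

text \<open>
  Deleting the cut \<open>{x, y}\<close> splits the remaining vertices into parts A and B with no edge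
  between them.  Each of the two disjoint spanning trees of G joins x and y by a path inside
  \<open>A \<union> {x, y}\<close> or inside \<open>B \<union> {x, y}\<close>.  Both trees cannot do so on the same side, since their
  restrictions to that side would form a proper bispanning subgraph, contradicting atomicity.
  An edge xy lies on both sides, so there is none, and one tree links x and y through A, the
  other through B.  On each side the restriction of one tree is a spanning tree, and that of the
  other becomes one once a new edge d joining x and y is added; so each side together with d is
  bispanning.  It is simple because an atomic graph with more than two vertices has no parallel
  edges.  Gluing the two sides along d gives back G.
\<close>

lemma adj_rel_mono: "F \<subseteq> G \<Longrightarrow> adj_rel F h \<subseteq> adj_rel G h"
  unfolding adj_rel_def by auto

lemma rtrancl_adj_rel_mono: "F \<subseteq> G \<Longrightarrow> (u, v) \<in> (adj_rel F h)\<^sup>* \<Longrightarrow> (u, v) \<in> (adj_rel G h)\<^sup>*"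
  by (meson adj_rel_mono rtrancl_mono subsetD)

lemma sym_adj_rel: "sym (adj_rel F h)"
  unfolding adj_rel_def sym_def by (auto simp: insert_commute)

lemma rtrancl_adj_rel_sym: "(u, v) \<in> (adj_rel F h)\<^sup>* \<Longrightarrow> (v, u) \<in> (adj_rel F h)\<^sup>*"
  using sym_rtrancl[OF sym_adj_rel] by (meson symD)

lemma connected_graphI_hubs:
  assumes "\<forall>v\<in>W. (v, x) \<in> (adj_rel F h)\<^sup>* \<or> (v, y) \<in> (adj_rel F h)\<^sup>*"
    and "(x, y) \<in> (adj_rel F h)\<^sup>*"
  shows "connected_graph W F h"
  unfolding connected_graph_def
proof (intro ballI)
  fix u v
  assume "u \<in> W" "v \<in> W"
  have "(u, x) \<in> (adj_rel F h)\<^sup>*" "(x, v) \<in> (adj_rel F h)\<^sup>*"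
    using assms \<open>u \<in> W\<close> \<open>v \<in> W\<close> by (meson rtrancl_trans rtrancl_adj_rel_sym)+
  then show "(u, v) \<in> (adj_rel F h)\<^sup>*"
    by (rule rtrancl_trans)
qed

lemma acyclic_graph_subset: "acyclic_graph F h \<Longrightarrow> F' \<subseteq> F \<Longrightarrow> acyclic_graph F' h"
  unfolding acyclic_graph_def by (meson Diff_mono order_refl rtrancl_adj_rel_mono subsetD)

lemma connected_graph_single_edge: "h e = {u, v} \<Longrightarrow> connected_graph {u, v} {e} h"
  by (rule connected_graphI_hubs[where x = u and y = v]) (auto simp: adj_rel_def)

lemma acyclic_graph_single_edge: "h e = {u, v} \<Longrightarrow> u \<noteq> v \<Longrightarrow> acyclic_graph {e} h"
  unfolding acyclic_graph_def adj_rel_def by (auto simp: doubleton_eq_iff)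

lemma graph_subgraph: "graph V E h \<Longrightarrow> subgraph V' E' V E h \<Longrightarrow> graph V' E' h"
  unfolding graph_def subgraph_def by (auto intro: finite_subset)

lemma bispanningI:
  assumes "graph V E h" "T1 \<inter> T2 = {}" "T1 \<union> T2 = E"
    and "connected_graph V T1 h" "acyclic_graph T1 h"
    and "connected_graph V T2 h" "acyclic_graph T2 h"
  shows "bispanning V E h"
  unfolding bispanning_def spanning_tree_def using assms by blast

lemma atomic_subgraph_eq:
  assumes "atomic V E h" "subgraph V' E' V E h" "bispanning V' E' h" "2 \<le> card V'"
  shows "V' = V"
proof -
  have "V' \<noteq> {}" "card V' \<noteq> 1"
    using assms(4) by auto
  then show ?thesis
    using assms(1-3) unfolding atomic_def by blast
qed

text \<open>Two parallel edges already form a bispanning graph.\<close>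
lemma atomic_parallel_edges:
  assumes "atomic V E h" "e \<in> E" "f \<in> E" "e \<noteq> f" "h e = h f"
  shows "V = h e"
proof -
  have G: "graph V E h"
    using assms(1) unfolding atomic_def bispanning_def by blast
  then obtain u v where uv: "h e = {u, v}" "u \<noteq> v"
    using assms(2) unfolding graph_def by (meson card_2_iff)
  have sub: "subgraph {u, v} {e, f} V E h"
    using G assms(2,3,5) uv unfolding graph_def subgraph_def by auto
  have "bispanning {u, v} {e, f} h"
    using assms(4,5) uv
    by (intro bispanningI[of _ _ _ "{e}" "{f}"] graph_subgraph[OF G sub]
        connected_graph_single_edge acyclic_graph_single_edge) auto
  with assms(1) sub uv show ?thesis
    using atomic_subgraph_eq by fastforce
qed

section \<open>Adding the virtual edge\<close>

text \<open>The side graphs have edge type \<open>'e option\<close>; their edge \<open>None\<close> is the new edge d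
  joining the two cut vertices.\<close>
definition virtual_incidence :: "'a \<Rightarrow> 'a \<Rightarrow> ('e \<Rightarrow> 'a set) \<Rightarrow> 'e option \<Rightarrow> 'a set" where
  "virtual_incidence x y h = case_option {x, y} h"

lemma virtual_incidence_simps [simp]:
  "virtual_incidence x y h None = {x, y}"
  "virtual_incidence x y h (Some e) = h e"
  by (simp_all add: virtual_incidence_def)

lemma adj_rel_image_Some: "adj_rel (Some ` F) (virtual_incidence x y h) = adj_rel F h"
  unfolding adj_rel_def by auto

lemma adj_rel_insert_None:
  "adj_rel (insert None X) (virtual_incidence x y h) =
     adj_rel X (virtual_incidence x y h) \<union> {(x, y), (y, x)}"
  unfolding adj_rel_def by (auto simp: doubleton_eq_iff)

lemma acyclic_graph_image_Some:
  assumes "acyclic_graph F h"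
  shows "acyclic_graph (Some ` F) (virtual_incidence x y h)"
  unfolding acyclic_graph_def
proof (intro ballI allI impI)
  fix e u v
  assume "e \<in> Some ` F" "virtual_incidence x y h e = {u, v}"
  then obtain f where "f \<in> F" "e = Some f" "h f = {u, v}"
    by auto
  moreover have "Some ` F - {e} = Some ` (F - {f})"
    using \<open>e = Some f\<close> by auto
  ultimately show "(u, v) \<notin> (adj_rel (Some ` F - {e}) (virtual_incidence x y h))\<^sup>*"
    using assms unfolding acyclic_graph_def by (simp add: adj_rel_image_Some)
qed

text \<open>A walk from x to y in G survives the deletion of any edge of F, so it can replace the
  virtual edge on a cycle.\<close>
lemma acyclic_graph_insert_virtual:
  assumes acyclic: "acyclic_graph T h" and "F \<subseteq> T" "G \<subseteq> T" "F \<inter> G = {}"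
    and G_walk: "(x, y) \<in> (adj_rel G h)\<^sup>*" and not_F_walk: "(x, y) \<notin> (adj_rel F h)\<^sup>*"
  shows "acyclic_graph (insert None (Some ` F)) (virtual_incidence x y h)"
  unfolding acyclic_graph_def
proof (intro ballI allI impI)
  fix e u v
  assume e: "e \<in> insert None (Some ` F)" and uv: "virtual_incidence x y h e = {u, v}"
  show "(u, v) \<notin> (adj_rel (insert None (Some ` F) - {e}) (virtual_incidence x y h))\<^sup>*"
  proof (cases e)
    case None
    then have "insert None (Some ` F) - {e} = Some ` F" "(u, v) = (x, y) \<or> (u, v) = (y, x)"
      using uv by (auto simp: doubleton_eq_iff)
    then show ?thesis
      using not_F_walk rtrancl_adj_rel_sym[of y x F h] by (auto simp: adj_rel_image_Some)
  next
    case (Some f)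
    then have f: "f \<in> F" "h f = {u, v}"
      using e uv by auto
    have "insert None (Some ` F) - {e} = insert None (Some ` (F - {f}))"
      using Some by auto
    then have adj: "adj_rel (insert None (Some ` F) - {e}) (virtual_incidence x y h) =
        adj_rel (F - {f}) h \<union> {(x, y), (y, x)}"
      by (simp add: adj_rel_insert_None adj_rel_image_Some)
    have "(x, y) \<in> (adj_rel (T - {f}) h)\<^sup>*"
      using assms(2-4) f(1) by (intro rtrancl_adj_rel_mono[OF _ G_walk]) auto
    then have "adj_rel (F - {f}) h \<union> {(x, y), (y, x)} \<subseteq> (adj_rel (T - {f}) h)\<^sup>*"
      using assms(2) adj_rel_mono[of "F - {f}" "T - {f}" h] rtrancl_adj_rel_sym[of x y "T - {f}" h]
      by auto
    then have "(adj_rel (insert None (Some ` F) - {e}) (virtual_incidence x y h))\<^sup>* \<subseteq>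
        (adj_rel (T - {f}) h)\<^sup>*"
      unfolding adj by (rule rtrancl_subset_rtrancl)
    moreover have "(u, v) \<notin> (adj_rel (T - {f}) h)\<^sup>*"
      using acyclic f assms(2) unfolding acyclic_graph_def by blast
    ultimately show ?thesis
      by blast
  qed
qed

section \<open>Transport along injective relabellings\<close>

definition incidence_preserving ::
  "('a \<Rightarrow> 'b) \<Rightarrow> ('e \<Rightarrow> 'f) \<Rightarrow> 'e set \<Rightarrow> ('e \<Rightarrow> 'a set) \<Rightarrow> ('f \<Rightarrow> 'b set) \<Rightarrow> bool" where
  "incidence_preserving \<phi> \<psi> F h h' \<longleftrightarrow> (\<forall>e\<in>F. h' (\<psi> e) = \<phi> ` h e)"

lemma incidence_preserving_subset:
  "incidence_preserving \<phi> \<psi> F h h' \<Longrightarrow> F' \<subseteq> F \<Longrightarrow> incidence_preserving \<phi> \<psi> F' h h'"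
  unfolding incidence_preserving_def by blast

lemma rtrancl_adj_rel_image:
  assumes "incidence_preserving \<phi> \<psi> F h h'" and "(u, v) \<in> (adj_rel F h)\<^sup>*"
  shows "(\<phi> u, \<phi> v) \<in> (adj_rel (\<psi> ` F) h')\<^sup>*"
  using assms(2)
proof (induction rule: rtrancl_induct)
  case base
  then show ?case by simp
next
  case (step w w')
  then obtain e where "e \<in> F" "h e = {w, w'}"
    by (auto simp: adj_rel_def)
  with assms(1) have "(\<phi> w, \<phi> w') \<in> adj_rel (\<psi> ` F) h'"
    unfolding adj_rel_def incidence_preserving_def by auto
  with step.IH show ?case
    by simp
qed

lemma rtrancl_adj_rel_image_inv:
  assumes G: "graph V F h" and inj: "inj_on \<phi> V" and hh: "incidence_preserving \<phi> \<psi> F h h'"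
    and walk: "(\<phi> u, b) \<in> (adj_rel (\<psi> ` F) h')\<^sup>*" and "u \<in> V"
  shows "\<exists>w\<in>V. b = \<phi> w \<and> (u, w) \<in> (adj_rel F h)\<^sup>*"
  using walk
proof (induction rule: rtrancl_induct)
  case base
  then show ?case using \<open>u \<in> V\<close> by auto
next
  case (step b c)
  then obtain w where w: "w \<in> V" "b = \<phi> w" "(u, w) \<in> (adj_rel F h)\<^sup>*"
    by auto
  obtain e where e: "e \<in> F" "h' (\<psi> e) = {b, c}"
    using step.hyps(2) by (auto simp: adj_rel_def)
  have e_V: "h e \<subseteq> V"
    using G e(1) unfolding graph_def by auto
  have "\<phi> ` h e = {\<phi> w, c}"
    using hh e w(2) unfolding incidence_preserving_def by auto
  then obtain w' where w': "w' \<in> h e" "c = \<phi> w'"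
    by (metis imageE insertI1 insert_commute)
  with \<open>\<phi> ` h e = {\<phi> w, c}\<close> have "\<phi> ` h e = \<phi> ` {w, w'}"
    by simp
  moreover have "{w, w'} \<subseteq> V"
    using w(1) w'(1) e_V by auto
  ultimately have "h e = {w, w'}"
    using inj_on_image_eq_iff[OF inj e_V] by blast
  with e(1) have "(w, w') \<in> adj_rel F h"
    unfolding adj_rel_def by auto
  with w(3) have "(u, w') \<in> (adj_rel F h)\<^sup>*"
    by (rule rtrancl_into_rtrancl)
  with w' e_V show ?case
    by blast
qed

lemma rtrancl_adj_rel_image_iff:
  assumes "graph V F h" "inj_on \<phi> V" "incidence_preserving \<phi> \<psi> F h h'" "u \<in> V" "v \<in> V"
  shows "(\<phi> u, \<phi> v) \<in> (adj_rel (\<psi> ` F) h')\<^sup>* \<longleftrightarrow> (u, v) \<in> (adj_rel F h)\<^sup>*"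
  using rtrancl_adj_rel_image[OF assms(3)] rtrancl_adj_rel_image_inv[OF assms(1-3) _ assms(4)]
    assms(2,5) by (metis inj_onD)

lemma graph_image:
  assumes "graph V E h" "inj_on \<phi> V" "incidence_preserving \<phi> \<psi> E h h'"
  shows "graph (\<phi> ` V) (\<psi> ` E) h'"
  unfolding graph_def
proof (intro conjI ballI)
  show "finite (\<phi> ` V)" "finite (\<psi> ` E)"
    using assms(1) unfolding graph_def by auto
  fix e'
  assume "e' \<in> \<psi> ` E"
  then obtain e where "e \<in> E" "h' e' = \<phi> ` h e"
    using assms(3) unfolding incidence_preserving_def by auto
  moreover have "h e \<subseteq> V" "card (h e) = 2"
    using assms(1) \<open>e \<in> E\<close> unfolding graph_def by auto
  ultimately show "h' e' \<subseteq> \<phi> ` V" "card (h' e') = 2"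
    using assms(2) by (auto simp: card_image inj_on_subset)
qed

lemma connected_graph_image:
  assumes "incidence_preserving \<phi> \<psi> T h h'" "connected_graph V T h"
  shows "connected_graph (\<phi> ` V) (\<psi> ` T) h'"
  using assms(2) rtrancl_adj_rel_image[OF assms(1)] unfolding connected_graph_def by blast

lemma acyclic_graph_image:
  assumes G: "graph V T h" and inj: "inj_on \<phi> V" "inj_on \<psi> T"
    and hh: "incidence_preserving \<phi> \<psi> T h h'" and acyclic: "acyclic_graph T h"
  shows "acyclic_graph (\<psi> ` T) h'"
  unfolding acyclic_graph_def
proof (intro ballI allI impI)
  fix e' a b
  assume "e' \<in> \<psi> ` T" and ab: "h' e' = {a, b}"
  then obtain e where e: "e \<in> T" "e' = \<psi> e"
    by auto
  obtain u v where uv: "h e = {u, v}" "u \<in> V" "v \<in> V"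
    using G e(1) unfolding graph_def by (metis card_2_iff insert_subset)
  have "{\<phi> u, \<phi> v} = {a, b}"
    using hh e ab uv unfolding incidence_preserving_def by auto
  then have ab_uv: "(a, b) = (\<phi> u, \<phi> v) \<or> (a, b) = (\<phi> v, \<phi> u)"
    by (auto simp: doubleton_eq_iff)
  have "\<psi> ` T - {e'} = \<psi> ` (T - {e})"
    using inj(2) e by (auto simp: inj_on_def)
  moreover have "graph V (T - {e}) h" "incidence_preserving \<phi> \<psi> (T - {e}) h h'"
    using G incidence_preserving_subset[OF hh, of "T - {e}"] unfolding graph_def by auto
  moreover have "(u, v) \<notin> (adj_rel (T - {e}) h)\<^sup>*" "(v, u) \<notin> (adj_rel (T - {e}) h)\<^sup>*"
    using acyclic e(1) uv(1) unfolding acyclic_graph_def by (metis insert_commute)+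
  ultimately show "(a, b) \<notin> (adj_rel (\<psi> ` T - {e'}) h')\<^sup>*"
    using ab_uv rtrancl_adj_rel_image_iff[of V "T - {e}" h \<phi> \<psi> h'] inj(1) uv(2,3) by auto
qed

lemma bispanning_image:
  assumes B: "bispanning V E h" and inj: "inj_on \<phi> V" "inj_on \<psi> E"
    and hh: "incidence_preserving \<phi> \<psi> E h h'"
  shows "bispanning (\<phi> ` V) (\<psi> ` E) h'"
proof -
  have G: "graph V E h"
    using B unfolding bispanning_def by auto
  obtain T1 T2 where T: "T1 \<inter> T2 = {}" "T1 \<union> T2 = E" "spanning_tree V E h T1" "spanning_tree V E h T2"
    using B unfolding bispanning_def by blast
  have image_tree: "connected_graph (\<phi> ` V) (\<psi> ` T) h' \<and> acyclic_graph (\<psi> ` T) h'"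
    if "spanning_tree V E h T" for T
  proof -
    have "T \<subseteq> E" "graph V T h"
      using that G unfolding spanning_tree_def graph_def by (auto intro: finite_subset)
    moreover have "incidence_preserving \<phi> \<psi> T h h'" "inj_on \<psi> T"
      using hh inj(2) \<open>T \<subseteq> E\<close> incidence_preserving_subset inj_on_subset by blast+
    ultimately show ?thesis
      using that inj(1) connected_graph_image acyclic_graph_image
      unfolding spanning_tree_def by blast
  qed
  have "\<psi> ` T1 \<inter> \<psi> ` T2 = {}"
    using T(1,2) inj(2) by (metis Un_upper1 Un_upper2 image_empty inj_on_image_Int)
  then show ?thesis
    using T image_tree graph_image[OF G inj(1) hh]
    by (intro bispanningI[of _ _ _ "\<psi> ` T1" "\<psi> ` T2"]) auto
qed

lemma simple_graph_image:
  assumes S: "simple_graph V E h" and inj: "inj_on \<phi> V" "inj_on \<psi> E"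
    and hh: "incidence_preserving \<phi> \<psi> E h h'"
  shows "simple_graph (\<phi> ` V) (\<psi> ` E) h'"
  unfolding simple_graph_def
proof (intro conjI inj_onI)
  have G: "graph V E h"
    using S unfolding simple_graph_def by auto
  then show "graph (\<phi> ` V) (\<psi> ` E) h'"
    using graph_image inj(1) hh by blast
  fix a b
  assume "a \<in> \<psi> ` E" "b \<in> \<psi> ` E" and eq: "h' a = h' b"
  then obtain e f where ef: "e \<in> E" "f \<in> E" "a = \<psi> e" "b = \<psi> f"
    by auto
  have "\<phi> ` h e = \<phi> ` h f" "h e \<subseteq> V" "h f \<subseteq> V"
    using eq ef hh G unfolding graph_def incidence_preserving_def by auto
  then have "h e = h f"
    using inj(1) by (simp add: inj_on_image_eq_iff)
  with S ef show "a = b"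
    unfolding simple_graph_def by (metis inj_onD)
qed

section \<open>2-separations\<close>

definition induced_edges :: "'e set \<Rightarrow> ('e \<Rightarrow> 'a set) \<Rightarrow> 'a set \<Rightarrow> 'e set" where
  "induced_edges F h S = {e \<in> F. h e \<subseteq> S}"

lemma induced_edges_subset: "induced_edges F h S \<subseteq> F"
  unfolding induced_edges_def by auto

lemma induced_edges_mono: "F \<subseteq> F' \<Longrightarrow> induced_edges F h S \<subseteq> induced_edges F' h S"
  unfolding induced_edges_def by auto

locale separation =
  fixes V :: "'a set" and E :: "'e set" and h :: "'e \<Rightarrow> 'a set" and x y :: 'a and A B :: "'a set"
  assumes graph: "graph V E h"
    and cut_vertices: "x \<noteq> y" "x \<in> V" "y \<in> V"
    and sides: "A \<union> B = V - {x, y}" "A \<inter> B = {}" "A \<noteq> {}" "B \<noteq> {}"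
    and no_crossing_edge: "\<forall>e\<in>E. h e \<inter> A = {} \<or> h e \<inter> B = {}"

lemma separation_swap: "separation V E h x y A B \<Longrightarrow> separation V E h x y B A"
  unfolding separation_def by (auto simp: Un_commute Int_commute)

context separation
begin

lemma finite_vertices: "finite V" and finite_edges: "finite E"
  using graph unfolding graph_def by auto

lemma edge_ends: "e \<in> E \<Longrightarrow> h e \<subseteq> V" "e \<in> E \<Longrightarrow> card (h e) = 2"
  using graph unfolding graph_def by auto

lemma vertices_eq: "V = A \<union> B \<union> {x, y}"
  using sides cut_vertices by auto

lemma cut_vertices_notin_sides: "x \<notin> A" "y \<notin> A" "x \<notin> B" "y \<notin> B"
  using sides by auto

lemma edge_into_side:
  assumes "e \<in> E" "S \<in> {A, B}" "h e \<inter> S \<noteq> {}"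
  shows "h e \<subseteq> S \<union> {x, y}"
  using assms no_crossing_edge edge_ends(1)[OF assms(1)] vertices_eq by blast

lemma edge_in_a_side: "e \<in> E \<Longrightarrow> h e \<subseteq> A \<union> {x, y} \<or> h e \<subseteq> B \<union> {x, y}"
  using edge_into_side[of e A] edge_into_side[of e B] edge_ends(1)[of e] vertices_eq by blast

lemma edge_in_both_sides:
  assumes "e \<in> E" "h e \<subseteq> A \<union> {x, y}" "h e \<subseteq> B \<union> {x, y}"
  shows "h e = {x, y}"
proof -
  have "h e \<subseteq> {x, y}"
    using assms(2,3) sides(2) by blast
  moreover have "card (h e) = card {x, y}"
    using edge_ends(2)[OF assms(1)] cut_vertices(1) by simp
  ultimately show ?thesis
    by (intro card_subset_eq) auto
qed

lemma induced_edges_sides_cover: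
  "induced_edges E h (A \<union> {x, y}) \<union> induced_edges E h (B \<union> {x, y}) = E"
  using edge_in_a_side unfolding induced_edges_def by blast

lemma side_subset_vertices: "A \<union> {x, y} \<subseteq> V"
  using sides cut_vertices by auto

lemma side_ne_vertices: "A \<union> {x, y} \<noteq> V"
  using sides vertices_eq by blast

lemma rtrancl_adj_rel_from_side:
  assumes "F \<subseteq> E" "(v, w) \<in> (adj_rel F h)\<^sup>*" "v \<in> A \<union> {x, y}"
  shows "(w \<in> A \<and> (v, w) \<in> (adj_rel (induced_edges F h (A \<union> {x, y})) h)\<^sup>*) \<or>
    (v, x) \<in> (adj_rel (induced_edges F h (A \<union> {x, y})) h)\<^sup>* \<or>
    (v, y) \<in> (adj_rel (induced_edges F h (A \<union> {x, y})) h)\<^sup>*"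
  using assms(2)
proof (induction rule: rtrancl_induct)
  case base
  then show ?case using assms(3) by auto
next
  case (step w w')
  then obtain f where f: "f \<in> F" "h f = {w, w'}"
    by (auto simp: adj_rel_def)
  from step.IH show ?case
  proof (elim disjE)
    assume w: "w \<in> A \<and> (v, w) \<in> (adj_rel (induced_edges F h (A \<union> {x, y})) h)\<^sup>*"
    have "h f \<subseteq> A \<union> {x, y}"
      using edge_into_side[of f A] f assms(1) w by auto
    with f have "(w, w') \<in> adj_rel (induced_edges F h (A \<union> {x, y})) h"
      unfolding adj_rel_def induced_edges_def by auto
    with w have "(v, w') \<in> (adj_rel (induced_edges F h (A \<union> {x, y})) h)\<^sup>*"
      by auto
    moreover have "w' \<in> A \<union> {x, y}"
      using \<open>h f \<subseteq> A \<union> {x, y}\<close> f by auto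
    ultimately show ?thesis
      by auto
  qed auto
qed

lemma side_vertex_reaches_cut:
  assumes "T \<subseteq> E" "connected_graph V T h" "v \<in> A \<union> {x, y}"
  shows "(v, x) \<in> (adj_rel (induced_edges T h (A \<union> {x, y})) h)\<^sup>* \<or>
    (v, y) \<in> (adj_rel (induced_edges T h (A \<union> {x, y})) h)\<^sup>*"
proof -
  have "(v, x) \<in> (adj_rel T h)\<^sup>*"
    using assms side_subset_vertices cut_vertices unfolding connected_graph_def by auto
  from rtrancl_adj_rel_from_side[OF assms(1) this assms(3)] show ?thesis
    using cut_vertices_notin_sides by auto
qed

lemma connected_graph_side:
  assumes "T \<subseteq> E" "connected_graph V T h"
    and "(x, y) \<in> (adj_rel (induced_edges T h (A \<union> {x, y})) h)\<^sup>*"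
  shows "connected_graph (A \<union> {x, y}) (induced_edges T h (A \<union> {x, y})) h"
  using connected_graphI_hubs[OF _ assms(3)] side_vertex_reaches_cut[OF assms(1,2)] by blast

lemma rtrancl_adj_rel_from_cut:
  assumes "F \<subseteq> E" "(x, w) \<in> (adj_rel F h)\<^sup>*"
  shows "w = x \<or>
    (\<exists>S\<in>{A, B}. w \<in> S \<and> (x, w) \<in> (adj_rel (induced_edges F h (S \<union> {x, y})) h)\<^sup>*) \<or>
    (\<exists>S\<in>{A, B}. (x, y) \<in> (adj_rel (induced_edges F h (S \<union> {x, y})) h)\<^sup>*)"
  using assms(2)
proof (induction rule: rtrancl_induct)
  case base
  then show ?case by simp
next
  case (step w w')
  then obtain f where f: "f \<in> E" "f \<in> F" "h f = {w, w'}"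
    using assms(1) by (auto simp: adj_rel_def)
  have extend: "(x, w') \<in> (adj_rel (induced_edges F h (S \<union> {x, y})) h)\<^sup>*"
    if "(x, w) \<in> (adj_rel (induced_edges F h (S \<union> {x, y})) h)\<^sup>*" "h f \<subseteq> S \<union> {x, y}" for S
  proof -
    have "(w, w') \<in> adj_rel (induced_edges F h (S \<union> {x, y})) h"
      using that(2) f unfolding adj_rel_def induced_edges_def by auto
    with that(1) show ?thesis
      by (rule rtrancl_into_rtrancl)
  qed
  have w'_cases: "w' \<in> A \<or> w' \<in> B \<or> w' = x \<or> w' = y"
    using edge_ends(1)[OF f(1)] f(3) vertices_eq by auto
  from step.IH show ?case
  proof (elim disjE bexE conjE)
    assume "w = x"
    show ?thesis
    proof (cases "w' = y")
      case True
      then have "h f \<subseteq> A \<union> {x, y}"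
        using \<open>w = x\<close> f(3) by auto
      then show ?thesis
        using extend[of A] \<open>w = x\<close> True by auto
    next
      case False
      then show ?thesis
        using w'_cases edge_into_side[OF f(1)] extend \<open>w = x\<close> f(3) by auto
    qed
  next
    fix S
    assume S: "S \<in> {A, B}" "w \<in> S" "(x, w) \<in> (adj_rel (induced_edges F h (S \<union> {x, y})) h)\<^sup>*"
    then have "h f \<subseteq> S \<union> {x, y}"
      using edge_into_side[OF f(1)] f(3) by auto
    then have "w' \<in> S \<union> {x, y}" "(x, w') \<in> (adj_rel (induced_edges F h (S \<union> {x, y})) h)\<^sup>*"
      using extend S(3) f(3) by auto
    with S(1) show ?thesis
      by blast
  qed blast
qed

lemma cut_linked_within_a_side:
  assumes "T \<subseteq> E" "connected_graph V T h"
  shows "(x, y) \<in> (adj_rel (induced_edges T h (A \<union> {x, y})) h)\<^sup>* \<or>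
    (x, y) \<in> (adj_rel (induced_edges T h (B \<union> {x, y})) h)\<^sup>*"
proof -
  have "(x, y) \<in> (adj_rel T h)\<^sup>*"
    using assms cut_vertices unfolding connected_graph_def by auto
  from rtrancl_adj_rel_from_cut[OF assms(1) this] show ?thesis
    using cut_vertices cut_vertices_notin_sides by auto
qed

end

locale atomic_separation = separation +
  assumes atomic: "atomic V E h"

lemma atomic_separation_swap: "atomic_separation V E h x y A B \<Longrightarrow> atomic_separation V E h x y B A"
  unfolding atomic_separation_def atomic_separation_axioms_def by (simp add: separation_swap)

context atomic_separation
begin

lemma inj_on_incidence: "inj_on h E"
proof (rule inj_onI, rule ccontr)
  fix e f
  assume "e \<in> E" "f \<in> E" "h e = h f" "e \<noteq> f"
  then have "V = h e"
    using atomic_parallel_edges[OF atomic] by blast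
  moreover obtain a where "a \<in> A"
    using sides(3) by auto
  then have "{a, x, y} \<subseteq> V" "card {a, x, y} = 3"
    using side_subset_vertices cut_vertices cut_vertices_notin_sides by (auto simp: card_insert_if)
  ultimately show False
    using card_mono[OF finite_vertices, of "{a, x, y}"] edge_ends(2)[OF \<open>e \<in> E\<close>] by simp
qed

lemma side_not_bispanning:
  assumes "F1 \<inter> F2 = {}" "F1 \<union> F2 \<subseteq> induced_edges E h (A \<union> {x, y})"
    and "connected_graph (A \<union> {x, y}) F1 h" "acyclic_graph F1 h"
    and "connected_graph (A \<union> {x, y}) F2 h" "acyclic_graph F2 h"
  shows False
proof -
  have sub: "subgraph (A \<union> {x, y}) (F1 \<union> F2) V E h"
    using assms(2) side_subset_vertices unfolding subgraph_def induced_edges_def by auto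
  have "bispanning (A \<union> {x, y}) (F1 \<union> F2) h"
    using assms by (intro bispanningI[of _ _ _ F1 F2] graph_subgraph[OF graph sub]) auto
  moreover have "2 \<le> card (A \<union> {x, y})"
    using cut_vertices(1) finite_subset[OF side_subset_vertices finite_vertices]
    by (metis Un_upper2 card_2_iff card_mono)
  ultimately show False
    using atomic_subgraph_eq[OF atomic sub] side_ne_vertices by blast
qed

text \<open>Otherwise the parts of the two trees inside \<open>A \<union> {x, y}\<close> would form a proper
  bispanning subgraph.\<close>
lemma trees_not_both_linked_within_side:
  assumes "T1 \<inter> T2 = {}" "spanning_tree V E h T1" "spanning_tree V E h T2"
    and "(x, y) \<in> (adj_rel (induced_edges T1 h (A \<union> {x, y})) h)\<^sup>*"
    and "(x, y) \<in> (adj_rel (induced_edges T2 h (A \<union> {x, y})) h)\<^sup>*"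
  shows False
proof (rule side_not_bispanning)
  show "induced_edges T1 h (A \<union> {x, y}) \<inter> induced_edges T2 h (A \<union> {x, y}) = {}"
    using assms(1) induced_edges_subset[of T1 h] induced_edges_subset[of T2 h] by blast
  show "induced_edges T1 h (A \<union> {x, y}) \<union> induced_edges T2 h (A \<union> {x, y}) \<subseteq>
      induced_edges E h (A \<union> {x, y})"
    using assms(2,3) induced_edges_mono unfolding spanning_tree_def by (metis Un_least)
  show "connected_graph (A \<union> {x, y}) (induced_edges T1 h (A \<union> {x, y})) h"
    "connected_graph (A \<union> {x, y}) (induced_edges T2 h (A \<union> {x, y})) h"
    using assms(2-5) connected_graph_side unfolding spanning_tree_def by blast+
  show "acyclic_graph (induced_edges T1 h (A \<union> {x, y})) h"
    "acyclic_graph (induced_edges T2 h (A \<union> {x, y})) h"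
    using assms(2,3) acyclic_graph_subset[OF _ induced_edges_subset] unfolding spanning_tree_def
    by blast+
qed

text \<open>An edge xy of one tree lies inside both sides, while the other tree links x and y inside
  one of them.\<close>
lemma no_cut_edge: "e \<in> E \<Longrightarrow> h e \<noteq> {x, y}"
proof -
  interpret swapped: atomic_separation V E h x y B A
    using atomic_separation_swap atomic_separation_axioms .
  have no_cut_edge_in_tree: "h e \<noteq> {x, y}"
    if "T \<inter> T' = {}" "spanning_tree V E h T" "spanning_tree V E h T'" "e \<in> T" for T T' e
  proof
    assume xy: "h e = {x, y}"
    have "(x, y) \<in> adj_rel (induced_edges T h (S \<union> {x, y})) h" for S
      using that(4) xy unfolding adj_rel_def induced_edges_def by auto
    moreover have "(x, y) \<in> (adj_rel (induced_edges T' h (A \<union> {x, y})) h)\<^sup>* \<or>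
        (x, y) \<in> (adj_rel (induced_edges T' h (B \<union> {x, y})) h)\<^sup>*"
      using cut_linked_within_a_side that(3) unfolding spanning_tree_def by blast
    ultimately show False
      using trees_not_both_linked_within_side[OF that(1-3)]
        swapped.trees_not_both_linked_within_side[OF that(1-3)] by blast
  qed
  obtain T1 T2 where "T1 \<inter> T2 = {}" "T1 \<union> T2 = E" "spanning_tree V E h T1" "spanning_tree V E h T2"
    using atomic unfolding atomic_def bispanning_def by blast
  then show "e \<in> E \<Longrightarrow> h e \<noteq> {x, y}"
    using no_cut_edge_in_tree[of T1 T2] no_cut_edge_in_tree[of T2 T1] by blast
qed

lemma induced_edges_sides_disjoint:
  "induced_edges E h (A \<union> {x, y}) \<inter> induced_edges E h (B \<union> {x, y}) = {}"
proof -
  have False if "e \<in> E" "h e \<subseteq> A \<union> {x, y}" "h e \<subseteq> B \<union> {x, y}" for e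
    using no_cut_edge[OF that(1)] edge_in_both_sides[OF that] by blast
  then show ?thesis
    unfolding induced_edges_def by blast
qed

lemma side_graph: "graph (A \<union> {x, y}) (insert None (Some ` induced_edges E h (A \<union> {x, y})))
    (virtual_incidence x y h)"
  using finite_subset[OF side_subset_vertices finite_vertices] finite_edges cut_vertices(1) edge_ends(2)
  unfolding graph_def induced_edges_def by auto

lemma side_simple: "simple_graph (A \<union> {x, y}) (insert None (Some ` induced_edges E h (A \<union> {x, y})))
    (virtual_incidence x y h)"
  unfolding simple_graph_def
proof (intro conjI side_graph inj_onI)
  fix a b
  assume "a \<in> insert None (Some ` induced_edges E h (A \<union> {x, y}))"
    "b \<in> insert None (Some ` induced_edges E h (A \<union> {x, y}))"
    and eq: "virtual_incidence x y h a = virtual_incidence x y h b"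
  then show "a = b"
    using no_cut_edge inj_on_incidence unfolding induced_edges_def
    by (cases a; cases b) (auto simp: inj_on_def)
qed

text \<open>The part of T inside the side is a spanning tree of it; the part of T' becomes one once the
  virtual edge is added, because T' joins x and y only through the other side.\<close>
lemma side_bispanningI:
  assumes T: "spanning_tree V E h T" and T': "spanning_tree V E h T'"
    and partition: "T \<inter> T' = {}" "T \<union> T' = E"
    and T_link: "(x, y) \<in> (adj_rel (induced_edges T h (A \<union> {x, y})) h)\<^sup>*"
    and T'_link: "(x, y) \<in> (adj_rel (induced_edges T' h (B \<union> {x, y})) h)\<^sup>*"
    and T'_no_link: "(x, y) \<notin> (adj_rel (induced_edges T' h (A \<union> {x, y})) h)\<^sup>*"
  shows "bispanning (A \<union> {x, y}) (insert None (Some ` induced_edges E h (A \<union> {x, y})))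
    (virtual_incidence x y h)"
proof (rule bispanningI[OF side_graph])
  let ?F = "induced_edges T h (A \<union> {x, y})" and ?F' = "induced_edges T' h (A \<union> {x, y})"
  have T_parts: "T \<subseteq> E" "connected_graph V T h" "acyclic_graph T h"
    and T'_parts: "T' \<subseteq> E" "connected_graph V T' h" "acyclic_graph T' h"
    using T T' unfolding spanning_tree_def by auto
  show "Some ` ?F \<inter> insert None (Some ` ?F') = {}"
    using partition(1) unfolding induced_edges_def by auto
  show "Some ` ?F \<union> insert None (Some ` ?F') = insert None (Some ` induced_edges E h (A \<union> {x, y}))"
    using partition(2) unfolding induced_edges_def by auto
  show "connected_graph (A \<union> {x, y}) (Some ` ?F) (virtual_incidence x y h)"
    using connected_graph_side[OF T_parts(1,2) T_link] unfolding connected_graph_def adj_rel_image_Some .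
  show "acyclic_graph (Some ` ?F) (virtual_incidence x y h)"
    using acyclic_graph_image_Some acyclic_graph_subset[OF T_parts(3) induced_edges_subset] .
  have adj': "adj_rel (insert None (Some ` ?F')) (virtual_incidence x y h) = adj_rel ?F' h \<union> {(x, y), (y, x)}"
    by (simp add: adj_rel_insert_None adj_rel_image_Some)
  show "connected_graph (A \<union> {x, y}) (insert None (Some ` ?F')) (virtual_incidence x y h)"
  proof (rule connected_graphI_hubs)
    show "(x, y) \<in> (adj_rel (insert None (Some ` ?F')) (virtual_incidence x y h))\<^sup>*"
      unfolding adj' by auto
    have "(adj_rel ?F' h)\<^sup>* \<subseteq> (adj_rel (insert None (Some ` ?F')) (virtual_incidence x y h))\<^sup>*"
      unfolding adj' by (rule rtrancl_mono) blast
    then show "\<forall>v\<in>A \<union> {x, y}. (v, x) \<in> (adj_rel (insert None (Some ` ?F')) (virtual_incidence x y h))\<^sup>* \<or>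
        (v, y) \<in> (adj_rel (insert None (Some ` ?F')) (virtual_incidence x y h))\<^sup>*"
      using side_vertex_reaches_cut[OF T'_parts(1,2)] by blast
  qed
  show "acyclic_graph (insert None (Some ` ?F')) (virtual_incidence x y h)"
  proof (rule acyclic_graph_insert_virtual[OF T'_parts(3) induced_edges_subset induced_edges_subset _
        T'_link T'_no_link])
    show "?F' \<inter> induced_edges T' h (B \<union> {x, y}) = {}"
      using induced_edges_sides_disjoint induced_edges_mono[OF T'_parts(1)] by blast
  qed
qed

lemma side_bispanning: "bispanning (A \<union> {x, y}) (insert None (Some ` induced_edges E h (A \<union> {x, y})))
    (virtual_incidence x y h)"
proof -
  interpret swapped: atomic_separation V E h x y B A
    using atomic_separation_swap atomic_separation_axioms .
  obtain T1 T2 where T: "T1 \<inter> T2 = {}" "T1 \<union> T2 = E" "spanning_tree V E h T1" "spanning_tree V E h T2"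
    using atomic unfolding atomic_def bispanning_def by blast
  let ?link = "\<lambda>T S. (x, y) \<in> (adj_rel (induced_edges T h (S \<union> {x, y})) h)\<^sup>*"
  have links: "?link T1 A \<or> ?link T1 B" "?link T2 A \<or> ?link T2 B"
    using T(3,4) cut_linked_within_a_side unfolding spanning_tree_def by blast+
  have "\<not> (?link T1 A \<and> ?link T2 A)" "\<not> (?link T1 B \<and> ?link T2 B)"
    using trees_not_both_linked_within_side[OF T(1,3,4)]
      swapped.trees_not_both_linked_within_side[OF T(1,3,4)] by blast+
  with links have "?link T1 A \<and> ?link T2 B \<and> \<not> ?link T2 A \<or> ?link T2 A \<and> ?link T1 B \<and> \<not> ?link T1 A"
    by blast
  moreover have "T2 \<inter> T1 = {}" "T2 \<union> T1 = E"
    using T(1,2) by auto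
  ultimately show ?thesis
    using side_bispanningI[OF T(3,4) T(1,2)] side_bispanningI[OF T(4,3)] by blast
qed

end

section \<open>Finding the 2-separation\<close>

lemma num_components_pos: "finite W \<Longrightarrow> W \<noteq> {} \<Longrightarrow> 1 \<le> num_components W F h"
  unfolding num_components_def by (simp add: Setcompr_eq_image Suc_le_eq card_gt_0_iff)

lemma num_components_le_1: "connected_graph W F h \<Longrightarrow> num_components W F h \<le> 1"
proof -
  assume "connected_graph W F h"
  then have "{{w \<in> W. (v, w) \<in> (adj_rel F h)\<^sup>*} | v. v \<in> W} \<subseteq> {W}"
    unfolding connected_graph_def by auto
  from card_mono[OF _ this] show ?thesis
    unfolding num_components_def by simp
qed

lemma vertex_cut_not_connected:
  assumes "finite V" "vertex_cut V E h S"
  shows "\<not> connected_graph (V - S) (del_edges S E h) h"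
proof
  assume conn: "connected_graph (V - S) (del_edges S E h) h"
  have "V - S \<noteq> {}"
    using assms(2) unfolding vertex_cut_def num_components_def by auto
  then have "1 \<le> num_components V E h"
    using num_components_pos assms(1) by blast
  then show False
    using num_components_le_1[OF conn] assms(2) unfolding vertex_cut_def by simp
qed

lemma k_connected_vertex_connectivity:
  assumes "finite V" "V \<noteq> {}"
  shows "k_connected (vertex_connectivity V E h) V E h"
  unfolding vertex_connectivity_def
proof (rule GreatestI_ex_nat)
  show "\<exists>k. k_connected k V E h"
    using assms by (intro exI[of _ 0]) (auto simp: k_connected_def card_gt_0_iff)
  show "k \<le> card V" if "k_connected k V E h" for k
    using that unfolding k_connected_def by auto
qed

lemma component_no_crossing_edge:
  fixes a :: 'a and S :: "'a set"
  assumes G: "graph V E h" and e: "e \<in> E"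
  defines "C \<equiv> {w \<in> V - S. (a, w) \<in> (adj_rel (del_edges S E h) h)\<^sup>*}"
  shows "h e \<inter> C = {} \<or> h e \<inter> (V - S - C) = {}"
proof (rule ccontr)
  assume "\<not> ?thesis"
  then obtain u w where uw: "u \<in> h e" "u \<in> C" "w \<in> h e" "w \<in> V - S - C"
    by auto
  have "card (h e) = 2" "u \<noteq> w"
    using G e uw unfolding graph_def by auto
  then have "h e = {u, w}"
    using uw by (metis card_2_iff doubleton_eq_iff insertE singletonD)
  moreover have "u \<notin> S" "w \<notin> S"
    using uw unfolding C_def by auto
  ultimately have "(u, w) \<in> adj_rel (del_edges S E h) h"
    using e unfolding del_edges_def adj_rel_def by auto
  then show False
    using uw unfolding C_def by (auto intro: rtrancl_into_rtrancl)
qed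

text \<open>A is the component of \<open>G - {x, y}\<close> containing some vertex a, and B the rest; since the
  connectivity is 2, deleting a single vertex does not disconnect G, so \<open>x \<noteq> y\<close>.\<close>
lemma separation_of_vertex_cut:
  assumes G: "graph V E h" and connectivity: "vertex_connectivity V E h = 2"
    and cut: "vertex_cut V E h {x, y}"
  shows "\<exists>A B. separation V E h x y A B"
proof -
  have fin: "finite V"
    using G unfolding graph_def by auto
  have xy_V: "{x, y} \<subseteq> V" and disconnected: "\<not> connected_graph (V - {x, y}) (del_edges {x, y} E h) h"
    using cut vertex_cut_not_connected[OF fin cut] unfolding vertex_cut_def by auto
  then have "k_connected 2 V E h"
    using k_connected_vertex_connectivity[OF fin] connectivity by (metis empty_iff insert_subset)
  then have "x \<noteq> y"
    using xy_V disconnected unfolding k_connected_def by fastforce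
  obtain a b where ab: "a \<in> V - {x, y}" "b \<in> V - {x, y}"
    "(a, b) \<notin> (adj_rel (del_edges {x, y} E h) h)\<^sup>*"
    using disconnected unfolding connected_graph_def by blast
  define A where "A = {w \<in> V - {x, y}. (a, w) \<in> (adj_rel (del_edges {x, y} E h) h)\<^sup>*}"
  have "separation V E h x y A (V - {x, y} - A)"
    using G \<open>x \<noteq> y\<close> xy_V ab component_no_crossing_edge[OF G, of _ "{x, y}" a]
    unfolding separation_def A_def by auto
  then show ?thesis
    by blast
qed

section \<open>Relabelling the two sides of a 2-clique sum\<close>

lemma relabelled_vertices_identified:
  assumes common: "VA \<inter> VB = {x, y}"
    and inj: "inj_on \<alpha>1 VA" "inj_on \<alpha>2 VB" and disjoint: "\<alpha>1 ` VA \<inter> \<alpha>2 ` VB = {}"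
    and \<sigma>: "\<forall>p\<in>VA. \<sigma> (\<alpha>1 p) = \<alpha>2 p"
    and \<phi>: "\<forall>p\<in>VA. \<phi> (\<alpha>1 p) = p" "\<forall>q\<in>VB. \<phi> (\<alpha>2 q) = q"
    and u: "u \<in> \<alpha>1 ` VA \<union> \<alpha>2 ` VB" and w: "w \<in> \<alpha>1 ` VA \<union> \<alpha>2 ` VB"
  shows "\<phi> u = \<phi> w \<longleftrightarrow> u = w \<or> (u \<in> \<alpha>1 ` {x, y} \<and> w = \<sigma> u) \<or> (w \<in> \<alpha>1 ` {x, y} \<and> u = \<sigma> w)"
proof -
  have cut_VA: "{x, y} \<subseteq> VA" and cut_VB: "{x, y} \<subseteq> VB"
    using common by auto
  have apart: "\<alpha>1 p \<noteq> \<alpha>2 q" "\<alpha>2 q \<noteq> \<alpha>1 p" if "p \<in> VA" "q \<in> VB" for p q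
    using disjoint that by blast+
  have \<alpha>1_in_cut: "\<alpha>1 p \<in> \<alpha>1 ` {x, y} \<longleftrightarrow> p \<in> {x, y}" if "p \<in> VA" for p
    using inj_on_image_mem_iff[OF inj(1) that cut_VA] .
  have \<alpha>2_notin_cut: "\<alpha>2 q \<notin> \<alpha>1 ` {x, y}" if "q \<in> VB" for q
    using apart(2) that cut_VA by blast
  from u w consider (AA) p q where "p \<in> VA" "q \<in> VA" "u = \<alpha>1 p" "w = \<alpha>1 q"
    | (AB) p q where "p \<in> VA" "q \<in> VB" "u = \<alpha>1 p" "w = \<alpha>2 q"
    | (BA) p q where "p \<in> VB" "q \<in> VA" "u = \<alpha>2 p" "w = \<alpha>1 q"
    | (BB) p q where "p \<in> VB" "q \<in> VB" "u = \<alpha>2 p" "w = \<alpha>2 q"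
    by blast
  then show ?thesis
  proof cases
    case AA
    have "\<alpha>1 a \<noteq> \<alpha>2 b" if "a \<in> VA" "b \<in> {x, y}" for a b
      using apart(1) that cut_VB by blast
    with AA show ?thesis
      using \<phi> \<sigma> \<alpha>1_in_cut inj(1) by (auto simp: inj_on_eq_iff)
  next
    case AB
    with common show ?thesis
      using \<phi> \<sigma> \<alpha>1_in_cut \<alpha>2_notin_cut apart inj(2) cut_VB by (auto simp: inj_on_eq_iff)
  next
    case BA
    with common show ?thesis
      using \<phi> \<sigma> \<alpha>1_in_cut \<alpha>2_notin_cut apart inj(2) cut_VB by (auto simp: inj_on_eq_iff)
  next
    case BB
    then show ?thesis
      using \<phi> \<alpha>2_notin_cut inj(2) by (auto simp: inj_on_eq_iff)
  qed
qed

lemma glue_relabelled_vertices: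
  assumes common: "VA \<inter> VB = {x, y}"
    and inj: "inj_on \<alpha>1 VA" "inj_on \<alpha>2 VB" and disjoint: "\<alpha>1 ` VA \<inter> \<alpha>2 ` VB = {}"
  obtains \<sigma> \<phi> where "bij_betw \<sigma> (\<alpha>1 ` {x, y}) (\<alpha>2 ` {x, y})"
    and "\<forall>p\<in>VA. \<phi> (\<alpha>1 p) = p" and "\<forall>q\<in>VB. \<phi> (\<alpha>2 q) = q"
    and "\<forall>u\<in>\<alpha>1 ` VA \<union> \<alpha>2 ` VB. \<forall>w\<in>\<alpha>1 ` VA \<union> \<alpha>2 ` VB. \<phi> u = \<phi> w \<longleftrightarrow>
      u = w \<or> (u \<in> \<alpha>1 ` {x, y} \<and> w = \<sigma> u) \<or> (w \<in> \<alpha>1 ` {x, y} \<and> u = \<sigma> w)"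
proof
  define \<sigma> where "\<sigma> = \<alpha>2 \<circ> inv_into VA \<alpha>1"
  define \<phi> where "\<phi> u = (if u \<in> \<alpha>1 ` VA then inv_into VA \<alpha>1 u else inv_into VB \<alpha>2 u)" for u
  have \<sigma>_\<alpha>1: "\<forall>p\<in>VA. \<sigma> (\<alpha>1 p) = \<alpha>2 p"
    using inj(1) unfolding \<sigma>_def by simp
  show \<phi>1: "\<forall>p\<in>VA. \<phi> (\<alpha>1 p) = p"
    using inj(1) unfolding \<phi>_def by simp
  have "\<alpha>2 q \<notin> \<alpha>1 ` VA" if "q \<in> VB" for q
    using disjoint that by blast
  then show \<phi>2: "\<forall>q\<in>VB. \<phi> (\<alpha>2 q) = q"
    using inj(2) unfolding \<phi>_def by simp
  show "bij_betw \<sigma> (\<alpha>1 ` {x, y}) (\<alpha>2 ` {x, y})"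
  proof (rule bij_betw_imageI)
    have cut: "x \<in> VA" "y \<in> VA" "inj_on \<alpha>2 {x, y}"
      using common inj_on_subset[OF inj(2), of "{x, y}"] by auto
    then have "inj_on (\<sigma> \<circ> \<alpha>1) {x, y}"
      using \<sigma>_\<alpha>1 by (simp add: inj_on_def)
    then show "inj_on \<sigma> (\<alpha>1 ` {x, y})"
      by (rule inj_on_imageI)
    show "\<sigma> ` \<alpha>1 ` {x, y} = \<alpha>2 ` {x, y}"
      using cut(1,2) \<sigma>_\<alpha>1 by simp
  qed
  show "\<forall>u\<in>\<alpha>1 ` VA \<union> \<alpha>2 ` VB. \<forall>w\<in>\<alpha>1 ` VA \<union> \<alpha>2 ` VB. \<phi> u = \<phi> w \<longleftrightarrow>
      u = w \<or> (u \<in> \<alpha>1 ` {x, y} \<and> w = \<sigma> u) \<or> (w \<in> \<alpha>1 ` {x, y} \<and> u = \<sigma> w)"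
    by (intro ballI relabelled_vertices_identified[OF assms \<sigma>_\<alpha>1 \<phi>1 \<phi>2])
qed

lemma glue_relabelled_edges:
  assumes disjoint: "EA \<inter> EB = {}"
    and \<beta>: "inj_on \<beta>1 (Some ` EA)" "inj_on \<beta>2 (Some ` EB)" "\<beta>1 ` Some ` EA \<inter> \<beta>2 ` Some ` EB = {}"
  obtains \<psi> where "bij_betw \<psi> (\<beta>1 ` Some ` EA \<union> \<beta>2 ` Some ` EB) (EA \<union> EB)"
    and "\<forall>e\<in>EA. \<psi> (\<beta>1 (Some e)) = e" and "\<forall>e\<in>EB. \<psi> (\<beta>2 (Some e)) = e"
proof
  define \<psi> where
    "\<psi> n = the (if n \<in> \<beta>1 ` Some ` EA then inv_into (Some ` EA) \<beta>1 n else inv_into (Some ` EB) \<beta>2 n)"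
    for n
  show \<psi>1: "\<forall>e\<in>EA. \<psi> (\<beta>1 (Some e)) = e"
    using \<beta>(1) unfolding \<psi>_def by simp
  have "\<beta>2 (Some e) \<notin> \<beta>1 ` Some ` EA" if "e \<in> EB" for e
    using \<beta>(3) that by blast
  then show \<psi>2: "\<forall>e\<in>EB. \<psi> (\<beta>2 (Some e)) = e"
    using \<beta>(2) unfolding \<psi>_def by simp
  show "bij_betw \<psi> (\<beta>1 ` Some ` EA \<union> \<beta>2 ` Some ` EB) (EA \<union> EB)"
    by (rule bij_betw_byWitness[where f' = "\<lambda>e. if e \<in> EA then \<beta>1 (Some e) else \<beta>2 (Some e)"])
      (use disjoint \<psi>1 \<psi>2 in auto)
qed

lemma two_clique_sum_relabelled:
  assumes vertices: "VA \<union> VB = V" "VA \<inter> VB = {x, y}"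
    and edges: "EA \<union> EB = E" "EA \<inter> EB = {}" "\<forall>e\<in>EA. h e \<subseteq> VA" "\<forall>e\<in>EB. h e \<subseteq> VB"
    and \<alpha>: "inj_on \<alpha>1 VA" "inj_on \<alpha>2 VB" "\<alpha>1 ` VA \<inter> \<alpha>2 ` VB = {}"
    and \<beta>: "inj_on \<beta>1 (insert None (Some ` EA))" "inj_on \<beta>2 (insert None (Some ` EB))"
      "\<beta>1 ` insert None (Some ` EA) \<inter> \<beta>2 ` insert None (Some ` EB) = {}"
    and h1: "incidence_preserving \<alpha>1 \<beta>1 (insert None (Some ` EA)) (virtual_incidence x y h) h1"
    and h2: "incidence_preserving \<alpha>2 \<beta>2 (insert None (Some ` EB)) (virtual_incidence x y h) h2"
  shows "two_clique_sum (\<alpha>1 ` VA) (\<beta>1 ` insert None (Some ` EA)) h1 (\<beta>1 None)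
    (\<alpha>2 ` VB) (\<beta>2 ` insert None (Some ` EB)) h2 (\<beta>2 None) V E h"
proof -
  obtain \<sigma> \<phi> where \<sigma>: "bij_betw \<sigma> (\<alpha>1 ` {x, y}) (\<alpha>2 ` {x, y})"
    and \<phi>: "\<forall>p\<in>VA. \<phi> (\<alpha>1 p) = p" "\<forall>q\<in>VB. \<phi> (\<alpha>2 q) = q"
    and identified: "\<forall>u\<in>\<alpha>1 ` VA \<union> \<alpha>2 ` VB. \<forall>w\<in>\<alpha>1 ` VA \<union> \<alpha>2 ` VB. \<phi> u = \<phi> w \<longleftrightarrow>
      u = w \<or> (u \<in> \<alpha>1 ` {x, y} \<and> w = \<sigma> u) \<or> (w \<in> \<alpha>1 ` {x, y} \<and> u = \<sigma> w)"
    by (rule glue_relabelled_vertices[OF vertices(2) \<alpha>])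
  have remaining: "\<beta>1 ` insert None (Some ` EA) - {\<beta>1 None} = \<beta>1 ` Some ` EA"
    "\<beta>2 ` insert None (Some ` EB) - {\<beta>2 None} = \<beta>2 ` Some ` EB"
    using inj_on_image_set_diff[OF \<beta>(1), of "insert None (Some ` EA)" "{None}"]
      inj_on_image_set_diff[OF \<beta>(2), of "insert None (Some ` EB)" "{None}"]
    by (simp_all add: subset_insertI)
  have "inj_on \<beta>1 (Some ` EA)" "inj_on \<beta>2 (Some ` EB)"
    using inj_on_subset[OF \<beta>(1) subset_insertI] inj_on_subset[OF \<beta>(2) subset_insertI] .
  moreover have "\<beta>1 ` Some ` EA \<inter> \<beta>2 ` Some ` EB = {}"
    using \<beta>(3) by blast
  ultimately obtain \<psi> where \<psi>: "bij_betw \<psi> (\<beta>1 ` Some ` EA \<union> \<beta>2 ` Some ` EB) (EA \<union> EB)"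
    "\<forall>e\<in>EA. \<psi> (\<beta>1 (Some e)) = e" "\<forall>e\<in>EB. \<psi> (\<beta>2 (Some e)) = e"
    by (rule glue_relabelled_edges[OF edges(2)])
  have ends: "h1 (\<beta>1 None) = \<alpha>1 ` {x, y}" "h2 (\<beta>2 None) = \<alpha>2 ` {x, y}"
    "\<forall>e\<in>EA. h1 (\<beta>1 (Some e)) = \<alpha>1 ` h e" "\<forall>e\<in>EB. h2 (\<beta>2 (Some e)) = \<alpha>2 ` h e"
    using h1 h2 unfolding incidence_preserving_def by auto
  show ?thesis
    unfolding two_clique_sum_def
  proof (intro exI conjI)
    show "bij_betw \<sigma> (h1 (\<beta>1 None)) (h2 (\<beta>2 None))"
      using \<sigma> ends(1,2) by simp
    have "\<phi> ` \<alpha>1 ` VA = VA" "\<phi> ` \<alpha>2 ` VB = VB"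
      by (simp_all add: image_image \<phi>)
    then show "\<phi> ` (\<alpha>1 ` VA \<union> \<alpha>2 ` VB) = V"
      using vertices(1) by (simp add: image_Un)
    show "\<forall>u\<in>\<alpha>1 ` VA \<union> \<alpha>2 ` VB. \<forall>w\<in>\<alpha>1 ` VA \<union> \<alpha>2 ` VB. \<phi> u = \<phi> w \<longleftrightarrow>
        u = w \<or> (u \<in> h1 (\<beta>1 None) \<and> w = \<sigma> u) \<or> (w \<in> h1 (\<beta>1 None) \<and> u = \<sigma> w)"
      unfolding ends(1) by (rule identified)
    show "bij_betw \<psi> (\<beta>1 ` insert None (Some ` EA) - {\<beta>1 None} \<union> (\<beta>2 ` insert None (Some ` EB) - {\<beta>2 None})) E"
      unfolding remaining edges(1)[symmetric] by (rule \<psi>(1))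
    have "\<forall>e\<in>EA. h (\<psi> (\<beta>1 (Some e))) = \<phi> ` h1 (\<beta>1 (Some e))"
      "\<forall>e\<in>EB. h (\<psi> (\<beta>2 (Some e))) = \<phi> ` h2 (\<beta>2 (Some e))"
      using \<psi>(2,3) ends(3,4) edges(3,4) \<phi> by (simp_all add: image_image subset_iff)
    then show "\<forall>e\<in>\<beta>1 ` insert None (Some ` EA) - {\<beta>1 None}. h (\<psi> e) = \<phi> ` h1 e"
      "\<forall>e\<in>\<beta>2 ` insert None (Some ` EB) - {\<beta>2 None}. h (\<psi> e) = \<phi> ` h2 e"
      unfolding remaining by simp_all
  qed
qed

lemma disjoint_nat_encodings:
  assumes "finite S1" "finite S2"
  obtains \<alpha> :: "'a \<Rightarrow> nat" and \<beta> :: "'b \<Rightarrow> nat"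
  where "inj_on \<alpha> S1" "inj_on \<beta> S2" "\<alpha> ` S1 \<inter> \<beta> ` S2 = {}"
proof -
  obtain enc :: "'a + 'b \<Rightarrow> nat" where enc: "inj_on enc (Inl ` S1 \<union> Inr ` S2)"
    using finite_imp_inj_to_nat_seg[of "Inl ` S1 \<union> Inr ` S2"] assms by blast
  then have "inj_on (enc \<circ> Inl) S1" "inj_on (enc \<circ> Inr) S2"
    "(enc \<circ> Inl) ` S1 \<inter> (enc \<circ> Inr) ` S2 = {}"
    by (auto simp: inj_on_def)
  then show ?thesis
    by (rule that)
qed

lemma nat_two_clique_sum_of_sides:
  fixes VA VB :: "'a set" and EA EB :: "'e set"
  assumes vertices: "VA \<union> VB = V" "VA \<inter> VB = {x, y}"
    and edges: "EA \<union> EB = E" "EA \<inter> EB = {}" "\<forall>e\<in>EA. h e \<subseteq> VA" "\<forall>e\<in>EB. h e \<subseteq> VB"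
    and side_A: "simple_graph VA (insert None (Some ` EA)) (virtual_incidence x y h)"
      "bispanning VA (insert None (Some ` EA)) (virtual_incidence x y h)"
    and side_B: "simple_graph VB (insert None (Some ` EB)) (virtual_incidence x y h)"
      "bispanning VB (insert None (Some ` EB)) (virtual_incidence x y h)"
  shows "\<exists>(V1::nat set) (E1::nat set) h1 d1 (V2::nat set) (E2::nat set) h2 d2.
    simple_graph V1 E1 h1 \<and> bispanning V1 E1 h1 \<and>
    simple_graph V2 E2 h2 \<and> bispanning V2 E2 h2 \<and>
    V1 \<inter> V2 = {} \<and> E1 \<inter> E2 = {} \<and> d1 \<in> E1 \<and> d2 \<in> E2 \<and>
    two_clique_sum V1 E1 h1 d1 V2 E2 h2 d2 V E h"
proof -
  let ?E1 = "insert None (Some ` EA)" and ?E2 = "insert None (Some ` EB)"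
  have "finite VA" "finite VB" "finite ?E1" "finite ?E2"
    using side_A(1) side_B(1) unfolding simple_graph_def graph_def by auto
  obtain \<alpha>1 \<alpha>2 :: "'a \<Rightarrow> nat" where \<alpha>: "inj_on \<alpha>1 VA" "inj_on \<alpha>2 VB" "\<alpha>1 ` VA \<inter> \<alpha>2 ` VB = {}"
    using \<open>finite VA\<close> \<open>finite VB\<close> by (rule disjoint_nat_encodings)
  obtain \<beta>1 \<beta>2 :: "'e option \<Rightarrow> nat" where \<beta>: "inj_on \<beta>1 ?E1" "inj_on \<beta>2 ?E2" "\<beta>1 ` ?E1 \<inter> \<beta>2 ` ?E2 = {}"
    using \<open>finite ?E1\<close> \<open>finite ?E2\<close> by (rule disjoint_nat_encodings)
  define h1 where "h1 n = \<alpha>1 ` virtual_incidence x y h (inv_into ?E1 \<beta>1 n)" for n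
  define h2 where "h2 n = \<alpha>2 ` virtual_incidence x y h (inv_into ?E2 \<beta>2 n)" for n
  have h1: "incidence_preserving \<alpha>1 \<beta>1 ?E1 (virtual_incidence x y h) h1"
    and h2: "incidence_preserving \<alpha>2 \<beta>2 ?E2 (virtual_incidence x y h) h2"
    using \<beta>(1,2) unfolding incidence_preserving_def h1_def h2_def by simp_all
  have "two_clique_sum (\<alpha>1 ` VA) (\<beta>1 ` ?E1) h1 (\<beta>1 None) (\<alpha>2 ` VB) (\<beta>2 ` ?E2) h2 (\<beta>2 None) V E h"
    using two_clique_sum_relabelled[OF vertices edges \<alpha> \<beta> h1 h2] .
  then show ?thesis
    using \<alpha>(3) \<beta>(3) simple_graph_image[OF side_A(1) \<alpha>(1) \<beta>(1) h1] bispanning_image[OF side_A(2) \<alpha>(1) \<beta>(1) h1]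
      simple_graph_image[OF side_B(1) \<alpha>(2) \<beta>(2) h2] bispanning_image[OF side_B(2) \<alpha>(2) \<beta>(2) h2]
    by blast
qed

theorem mainTheorem10:
  fixes V :: "'a set" and E :: "'e set" and h :: "'e \<Rightarrow> 'a set" and x y :: 'a
  assumes "graph V E h"
    and "atomic V E h"
    and "vertex_connectivity V E h = 2"
    and "vertex_cut V E h {x, y}"
  shows "(\<forall>e\<in>E. h e \<noteq> {x, y}) \<and>
    (\<exists>(V1::nat set) (E1::nat set) h1 d1 (V2::nat set) (E2::nat set) h2 d2.
       simple_graph V1 E1 h1 \<and> bispanning V1 E1 h1 \<and>
       simple_graph V2 E2 h2 \<and> bispanning V2 E2 h2 \<and>
       V1 \<inter> V2 = {} \<and> E1 \<inter> E2 = {} \<and> d1 \<in> E1 \<and> d2 \<in> E2 \<and>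
       two_clique_sum V1 E1 h1 d1 V2 E2 h2 d2 V E h)"
proof -
  obtain A B where "separation V E h x y A B"
    using separation_of_vertex_cut[OF assms(1,3,4)] by blast
  then interpret atomic_separation V E h x y A B
    using assms(2) by (simp add: atomic_separation_def atomic_separation_axioms_def)
  interpret swapped: atomic_separation V E h x y B A
    using atomic_separation_swap atomic_separation_axioms .
  have vertices: "A \<union> {x, y} \<union> (B \<union> {x, y}) = V" "(A \<union> {x, y}) \<inter> (B \<union> {x, y}) = {x, y}"
    using vertices_eq sides(2) by auto
  have within: "\<forall>e\<in>induced_edges E h (S \<union> {x, y}). h e \<subseteq> S \<union> {x, y}" for S
    unfolding induced_edges_def by blast
  from nat_two_clique_sum_of_sides[OF vertices induced_edges_sides_cover induced_edges_sides_disjoint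
      within within side_simple side_bispanning swapped.side_simple swapped.side_bispanning]
  show ?thesis
    using no_cut_edge by blast
qed

end
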